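(* Let $(R(m,d))_{m,d\in\mathbb{N}}$ be a family of graphs as described in the context. Let $d\in\mathbb{N}$ and $\varepsilon>0$. Then for all sufficiently large $m$ and every $\alpha\in[0,1]$, every subgraph $G$ of $R(m,d)$ with at least $(\alpha+2\varepsilon)\cdot e(R(m,d))$ edges satisfies \[ \frac{1}{d}\sum_{\ell=1}^d \frac{e_\ell(G)}{2^{d-1}m^2}\ge\alpha+\varepsilon. \]
   Context: For distinct $x,y\in\{0,1\}^d$, $\delta(x,y)=\min\{i: x_i\ne y_i\}$. For $x\in\{0,1\}^d$ the block $B_x$ is $\{x\}\times[m]$. An edge of a graph on $\{0,1\}^d\times[m]$ joining $B_x$ to $B_y$ with $\delta(x,y)=\ell$ is a level-$\ell$ edge; $e_\ell(G)$ is the number of level-$\ell$ edges of $G$. The family $R(m,d)$ (a graph on $\{0,1\}^d\times[m]$) satisfies: for every $d\in\mathbb{N}$ and $\varepsilon>0$, for all sufficiently large $m$, (i) for every $\ell\in[d]$, $e_\ell(R(m,d))=(1\pm\varepsilon)2^{d-1}m^2$ and $e(R(m,d))=(1\pm\varepsilon)d2^{d-1}m^2$; (ii) for all distinct $x,y$ and $P\subseteq B_x$, $Q\subseteq B_y$ with $|P|,|Q|\ge m^{2/3}$, the number of edges between $P$ and $Q$ is at most $(1+\varepsilon)2^{-d+\delta(x,y)}|P||Q|$. Here $a=(1\pm\varepsilon)b$ means $(1-\varepsilon)b\le a\le(1+\varepsilon)b$. *)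

theory Defs
  imports Complex_Main
begin

text \<open>Vertices of the graph on {0,1}^d x [m]: pairs (x, i) with x a boolean list
  of length d (coordinates x_1..x_d stored at list positions 0..d-1) and i in {1..m}.\<close>

type_synonym vert = "bool list \<times> nat"

definition cube :: "nat \<Rightarrow> bool list set" where
  "cube d = {x. length x = d}"

definition verts :: "nat \<Rightarrow> nat \<Rightarrow> vert set" where
  "verts m d = cube d \<times> {1..m}"

definition block :: "nat \<Rightarrow> bool list \<Rightarrow> vert set" where
  "block m x = {x} \<times> {1..m}"

definition is_graph_on :: "vert set \<Rightarrow> vert set set \<Rightarrow> bool" where
  "is_graph_on V E \<longleftrightarrow> E \<subseteq> {{u, v} | u v. u \<in> V \<and> v \<in> V \<and> u \<noteq> v}"

definition delta :: "bool list \<Rightarrow> bool list \<Rightarrow> nat" where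
  "delta x y = Suc (LEAST i. x ! i \<noteq> y ! i)"

definition level_edges :: "nat \<Rightarrow> vert set set \<Rightarrow> vert set set" where
  "level_edges l E = {e \<in> E. \<exists>u v. e = {u, v} \<and> fst u \<noteq> fst v \<and> delta (fst u) (fst v) = l}"

definition e_lev :: "nat \<Rightarrow> vert set set \<Rightarrow> nat" where
  "e_lev l E = card (level_edges l E)"

definition e_between :: "vert set set \<Rightarrow> vert set \<Rightarrow> vert set \<Rightarrow> nat" where
  "e_between E P Q = card {e \<in> E. \<exists>p\<in>P. \<exists>q\<in>Q. e = {p, q}}"

definition approx_eq :: "real \<Rightarrow> real \<Rightarrow> real \<Rightarrow> bool" where
  "approx_eq eps a b \<longleftrightarrow> (1 - eps) * b \<le> a \<and> a \<le> (1 + eps) * b"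

definition R_family :: "(nat \<Rightarrow> nat \<Rightarrow> vert set set) \<Rightarrow> bool" where
  "R_family R \<longleftrightarrow>
     (\<forall>m d. is_graph_on (verts m d) (R m d)) \<and>
     (\<forall>d \<ge> 1. \<forall>eps > 0. \<exists>M. \<forall>m \<ge> M.
        (\<forall>l \<in> {1..d}. approx_eq eps (real (e_lev l (R m d))) (2 ^ (d - 1) * real m ^ 2)) \<and>
        approx_eq eps (real (card (R m d))) (real d * 2 ^ (d - 1) * real m ^ 2) \<and>
        (\<forall>x \<in> cube d. \<forall>y \<in> cube d. \<forall>P Q. x \<noteq> y \<longrightarrow> P \<subseteq> block m x \<longrightarrow> Q \<subseteq> block m y \<longrightarrow>
           real (card P) \<ge> real m powr (2/3) \<longrightarrow> real (card Q) \<ge> real m powr (2/3) \<longrightarrow>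
           real (e_between (R m d) P Q)
             \<le> (1 + eps) * 2 powr (real (delta x y) - real d) * real (card P) * real (card Q)))"

end

theory Submission
  imports Defs
begin

text \<open>Only the edge counts of property (i) matter. Every edge of a subgraph \<open>G\<close> lying on none
  of the levels \<open>1..d\<close> is such an edge of \<open>R(m,d)\<close>; so with \<open>D = d 2^(d-1) m^2\<close>
  the level edges of \<open>G\<close> number at least \<open>e(G) - e(R(m,d)) + (1-\<eta>) D\<close>; as
  \<open>e(G) \<ge> (\<alpha>+2\<epsilon>) e(R(m,d))\<close> and \<open>e(R(m,d)) = (1\<plusminus>\<eta>) D\<close>, this is at least
  \<open>(\<alpha>+2\<epsilon>) D - (2+2\<epsilon>) \<eta> D\<close>, which is \<open>(\<alpha>+\<epsilon>) D\<close> for \<open>\<eta> = \<epsilon>/(2+2\<epsilon>)\<close>.\<close>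

lemma delta_commute: "delta x y = delta y x"
  unfolding delta_def by (metis (no_types, lifting))

lemma level_edges_disjoint:
  assumes "l \<noteq> l'"
  shows "level_edges l E \<inter> level_edges l' E = {}"
proof (rule ccontr)
  assume "level_edges l E \<inter> level_edges l' E \<noteq> {}"
  then obtain e where "e \<in> level_edges l E" and "e \<in> level_edges l' E" by blast
  then obtain u v u' v' where "e = {u, v}" "delta (fst u) (fst v) = l"
    and "e = {u', v'}" "delta (fst u') (fst v') = l'"
    unfolding level_edges_def mem_Collect_eq by metis
  then show False
    using assms delta_commute by (auto simp: doubleton_eq_iff)
qed

lemma level_edges_subgraph: "G \<subseteq> E \<Longrightarrow> level_edges l G = G \<inter> level_edges l E"
  unfolding level_edges_def by auto

lemma sum_e_lev_eq_card_UN: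
  assumes "finite E" and "finite I"
  shows "(\<Sum>l\<in>I. e_lev l E) = card (\<Union>l\<in>I. level_edges l E)"
proof -
  have "\<And>l. finite (level_edges l E)"
    using assms(1) unfolding level_edges_def by auto
  then show ?thesis
    unfolding e_lev_def
    by (intro card_UN_disjoint[symmetric] assms(2)) (auto dest: level_edges_disjoint)
qed

lemma card_le_card_Int_plus_card_Diff:
  assumes "finite E" and "G \<subseteq> E"
  shows "card G \<le> card (G \<inter> S) + card (E - S)"
proof -
  have "card G = card (G \<inter> S) + card (G - S)"
    using assms by (meson card_Int_Diff finite_subset)
  also have "card (G - S) \<le> card (E - S)"
    using assms by (intro card_mono) auto
  finally show ?thesis by simp
qed

lemma sum_e_lev_subgraph_ge:
  assumes "finite E" and "G \<subseteq> E" and "finite I"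
  shows "real (card G) - real (card E) + (\<Sum>l\<in>I. real (e_lev l E))
           \<le> (\<Sum>l\<in>I. real (e_lev l G))"
proof -
  define S where "S = (\<Union>l\<in>I. level_edges l E)"
  have "S \<subseteq> E" unfolding S_def level_edges_def by auto
  then have "card (E - S) = card E - card S" "card S \<le> card E"
    using assms(1) by (auto simp: card_Diff_subset finite_subset card_mono)
  moreover have "(\<Sum>l\<in>I. e_lev l G) = card (G \<inter> S)"
    using assms level_edges_subgraph[OF assms(2)]
    by (simp add: sum_e_lev_eq_card_UN finite_subset S_def)
  moreover have "(\<Sum>l\<in>I. e_lev l E) = card S"
    using assms by (simp add: sum_e_lev_eq_card_UN S_def)
  ultimately show ?thesis
    using card_le_card_Int_plus_card_Diff[OF assms(1,2), of S]
    by (simp flip: of_nat_sum)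
qed

lemma finite_cube: "finite (cube d)"
  unfolding cube_def using finite_lists_length_eq[of "UNIV :: bool set" d] by simp

lemma finite_verts: "finite (verts m d)"
  unfolding verts_def by (simp add: finite_cube)

lemma finite_graph: "is_graph_on V E \<Longrightarrow> finite V \<Longrightarrow> finite E"
  unfolding is_graph_on_def by (rule finite_subset[of _ "Pow V"]) auto

lemma R_family_finite:
  assumes "R_family R"
  shows "finite (R m d)"
  by (rule finite_graph[OF conjunct1[OF assms[unfolded R_family_def], rule_format] finite_verts])

lemma R_family_edge_counts:
  assumes "R_family R" and "d \<ge> 1" and "\<eta> > 0"
  obtains M where
    "\<And>m l. m \<ge> M \<Longrightarrow> l \<in> {1..d} \<Longrightarrow>
      approx_eq \<eta> (real (e_lev l (R m d))) (2 ^ (d - 1) * real m ^ 2)"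
    "\<And>m. m \<ge> M \<Longrightarrow>
      approx_eq \<eta> (real (card (R m d))) (real d * 2 ^ (d - 1) * real m ^ 2)"
  using conjunct2[OF assms(1)[unfolded R_family_def], rule_format, OF assms(2,3)]
  by metis

lemma approx_eq_iff_abs: "approx_eq \<eta> a b \<longleftrightarrow> \<bar>a - b\<bar> \<le> \<eta> * b"
  unfolding approx_eq_def by (auto simp: algebra_simps)

lemma density_margin:
  fixes D \<eta> eps alpha cR cG sR sG :: real
  assumes "0 \<le> alpha" "alpha \<le> 1" "0 < eps" "0 \<le> D" "(2 + 2 * eps) * \<eta> \<le> eps"
    and "\<bar>cR - D\<bar> \<le> \<eta> * D" "(1 - \<eta>) * D \<le> sR"
    and "(alpha + 2 * eps) * cR \<le> cG" "cG - cR + sR \<le> sG"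
  shows "(alpha + eps) * D \<le> sG"
proof -
  have "\<bar>(alpha + 2 * eps - 1) * (cR - D)\<bar> \<le> (1 + 2 * eps) * (\<eta> * D)"
    unfolding abs_mult using assms(1-3,6) by (intro mult_mono) auto
  moreover have "(1 + 2 * eps) * (\<eta> * D) + \<eta> * D \<le> eps * D"
    using mult_right_mono[OF assms(5,4)] by (simp add: algebra_simps)
  ultimately show ?thesis
    using assms(7-9) by (auto simp: algebra_simps abs_le_iff)
qed

lemma subgraph_level_density:
  fixes \<eta> eps alpha :: real
  assumes "finite E" and "G \<subseteq> E" and "d \<ge> 1" and "m \<ge> 1"
    and "0 \<le> alpha" "alpha \<le> 1" "0 < eps" and margin: "(2 + 2 * eps) * \<eta> \<le> eps"
    and levels: "\<And>l. l \<in> {1..d} \<Longrightarrow> approx_eq \<eta> (real (e_lev l E)) (2 ^ (d - 1) * real m ^ 2)"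
    and total: "approx_eq \<eta> (real (card E)) (real d * 2 ^ (d - 1) * real m ^ 2)"
    and dense: "(alpha + 2 * eps) * real (card E) \<le> real (card G)"
  shows "(1 / real d) * (\<Sum>l = 1..d. real (e_lev l G) / (2 ^ (d - 1) * real m ^ 2)) \<ge> alpha + eps"
proof -
  define N where "N = 2 ^ (d - 1) * real m ^ 2"
  define D where "D = real d * N"
  have "D > 0" using assms(3,4) by (simp add: D_def N_def)
  have "(\<Sum>l = 1..d. (1 - \<eta>) * N) \<le> (\<Sum>l = 1..d. real (e_lev l E))"
    using levels by (intro sum_mono) (auto simp: approx_eq_def N_def)
  then have levels_E: "(1 - \<eta>) * D \<le> (\<Sum>l = 1..d. real (e_lev l E))"
    by (simp add: D_def mult.left_commute)
  have total_E: "\<bar>real (card E) - D\<bar> \<le> \<eta> * D"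
    using total by (simp add: approx_eq_iff_abs D_def N_def mult.assoc)
  have "(alpha + eps) * D \<le> (\<Sum>l = 1..d. real (e_lev l G))"
    using assms(5-7) \<open>D > 0\<close>
    by (intro density_margin[OF _ _ _ _ margin total_E levels_E dense
          sum_e_lev_subgraph_ge[OF assms(1,2)]]) auto
  moreover have "(1 / real d) * (\<Sum>l = 1..d. real (e_lev l G) / N)
      = (\<Sum>l = 1..d. real (e_lev l G)) / D"
    by (simp add: D_def sum_divide_distrib[symmetric])
  ultimately show ?thesis
    by (simp add: N_def pos_le_divide_eq[OF \<open>D > 0\<close>])
qed

theorem proposition2p5:
  fixes R :: "nat \<Rightarrow> nat \<Rightarrow> vert set set" and d :: nat and eps :: real
  assumes "R_family R" and "d \<ge> 1" and "eps > 0"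
  shows "\<exists>M. \<forall>m \<ge> M. \<forall>alpha \<in> {0..1::real}. \<forall>G. G \<subseteq> R m d \<longrightarrow>
           real (card G) \<ge> (alpha + 2 * eps) * real (card (R m d)) \<longrightarrow>
           (1 / real d) * (\<Sum>l = 1..d. real (e_lev l G) / (2 ^ (d - 1) * real m ^ 2)) \<ge> alpha + eps"
proof -
  define \<eta> where "\<eta> = eps / (2 + 2 * eps)"
  have "\<eta> > 0" and margin: "(2 + 2 * eps) * \<eta> \<le> eps"
    using assms(3) by (auto simp: \<eta>_def)
  then obtain M where levels: "\<And>m l. m \<ge> M \<Longrightarrow> l \<in> {1..d} \<Longrightarrow>
      approx_eq \<eta> (real (e_lev l (R m d))) (2 ^ (d - 1) * real m ^ 2)"
    and total: "\<And>m. m \<ge> M \<Longrightarrow>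
      approx_eq \<eta> (real (card (R m d))) (real d * 2 ^ (d - 1) * real m ^ 2)"
    using R_family_edge_counts assms(1,2) by blast
  show ?thesis
  proof (intro exI[of _ "max M 1"] allI impI ballI)
    fix m alpha G
    assume "max M 1 \<le> m" and "alpha \<in> {0..1::real}" and "G \<subseteq> R m d"
      and "(alpha + 2 * eps) * real (card (R m d)) \<le> real (card G)"
    then show "(1 / real d) * (\<Sum>l = 1..d. real (e_lev l G) / (2 ^ (d - 1) * real m ^ 2))
        \<ge> alpha + eps"
      using R_family_finite[OF assms(1)] assms(2,3) margin levels total
      by (intro subgraph_level_density[where \<eta> = \<eta>]) auto
  qed
qed

end
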